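(* Let $L\ge1$ be an integer. For Lebesgue-almost every $c\in\mathbb{C}^L$, the family of $L^2$ matrices $$\big\{(\pi(k,n)c)(\pi(k,n)c)^*\big\}_{(k,n)\in\mathbb{Z}_L\times\mathbb{Z}_L}\subseteq\mathbb{C}^{L\times L}$$ is linearly independent; that is, the diagonal pattern $\Lambda_{\mathrm{diag}}=\{((k,n),(k,n)):(k,n)\in\mathbb{Z}_L^2\}$ is permissible for almost every $c$.
   Context: On $\mathbb{C}^L$ (indices mod $L$): $T^kc[p]=c[p-k]$, $M^nc[p]=e^{2\pi inp/L}c[p]$, $\pi(k,n)=M^nT^k$. A set $\Lambda\subseteq(\mathbb{Z}_L^2)^2$ is a permissible pattern (for $c$) if the matrices $\{\pi(\lambda)c\,(\pi(\lambda')c)^*\}_{(\lambda,\lambda')\in\Lambda}$ are linearly independent. *)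

theory Defs
  imports "HOL-Analysis.Analysis" "HOL-Probability.Probability"
begin

text \<open>Vectors in C^L are functions nat => complex, only indices 0..L-1 matter;
  Z_L is represented by {0..<L}.\<close>

definition lebesgue_CL :: "nat \<Rightarrow> (nat \<Rightarrow> complex) measure" where
  "lebesgue_CL L = PiM {..<L} (\<lambda>_. (lborel :: complex measure))"

definition transl :: "nat \<Rightarrow> nat \<Rightarrow> (nat \<Rightarrow> complex) \<Rightarrow> (nat \<Rightarrow> complex)" where
  "transl L k c = (\<lambda>p. c (nat ((int p - int k) mod int L)))"

definition modul :: "nat \<Rightarrow> nat \<Rightarrow> (nat \<Rightarrow> complex) \<Rightarrow> (nat \<Rightarrow> complex)" where
  "modul L n c = (\<lambda>p. exp (2 * of_real pi * \<i> * of_nat n * of_nat p / of_nat L) * c p)"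

definition tfshift :: "nat \<Rightarrow> nat \<times> nat \<Rightarrow> (nat \<Rightarrow> complex) \<Rightarrow> (nat \<Rightarrow> complex)" where
  "tfshift L kn c = modul L (snd kn) (transl L (fst kn) c)"

definition permissible ::
  "nat \<Rightarrow> ((nat \<times> nat) \<times> (nat \<times> nat)) set \<Rightarrow> (nat \<Rightarrow> complex) \<Rightarrow> bool" where
  "permissible L \<Lambda> c \<longleftrightarrow>
     (\<forall>a :: (nat \<times> nat) \<times> (nat \<times> nat) \<Rightarrow> complex.
        (\<forall>p<L. \<forall>q<L. (\<Sum>ll\<in>\<Lambda>. a ll * tfshift L (fst ll) c p * cnj (tfshift L (snd ll) c q)) = 0)
        \<longrightarrow> (\<forall>ll\<in>\<Lambda>. a ll = 0))"

definition diag_pattern :: "nat \<Rightarrow> ((nat \<times> nat) \<times> (nat \<times> nat)) set" where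
  "diag_pattern L = {(kn, kn) | kn. kn \<in> {..<L} \<times> {..<L}}"

end

theory Submission
  imports Defs
begin

text \<open>
  Pair the matrix relation \<open>\<Sum> b\<^sub>k\<^sub>n (\<pi>(k,n)c)(\<pi>(k,n)c)\<^sup>* = 0\<close> with the character
  \<open>e(-jp)\<close> along its \<open>d\<close>-th cyclic diagonal. Because \<open>\<pi>(k,n)\<close> multiplies the ambiguity
  function \<open>A\<^sub>c(j,d) = \<Sum>\<^sub>m e(-jm) c\<^sub>m conj(c\<^sub>m\<^sub>-\<^sub>d)\<close> by the phase \<open>e(nd - jk)\<close>, the result is
  \<open>A\<^sub>c(j,d)\<close> times the two-dimensional discrete Fourier transform of \<open>b\<close>. So if \<open>A\<^sub>c\<close> has
  no zeros, the transform of \<open>b\<close> vanishes and hence \<open>b = 0\<close>.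

  Each \<open>A\<^sub>c(j,d)\<close> is almost everywhere nonzero: as a function of the single coordinate
  \<open>c\<^sub>0\<close> it is \<open>|c\<^sub>0|\<^sup>2\<close> plus a constant when \<open>d = 0\<close>, and real-affine in \<open>c\<^sub>0\<close> with
  \<open>conj c\<^sub>0\<close>-coefficient \<open>e(-jd) c\<^sub>d\<close> when \<open>d \<noteq> 0\<close>. Its zero set in every fibre is thus a
  circle or a line (as soon as \<open>c\<^sub>d \<noteq> 0\<close>), which is Lebesgue null, and Fubini concludes.
\<close>

section \<open>Null sets through fibres\<close>

lemma AE_PiM_if_AE_fibres:
  assumes "product_sigma_finite M" "finite I" "i \<in> I"
    and pred: "Measurable.pred (Pi\<^sub>M I M) P"
    and fibres: "\<And>x. AE y in M i. P (x(i := y))"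
  shows "AE x in Pi\<^sub>M I M. P x"
proof -
  interpret product_sigma_finite M by fact
  define S where "S = {x \<in> space (Pi\<^sub>M I M). \<not> P x}"
  have meas: "S \<in> sets (Pi\<^sub>M I M)"
    unfolding S_def using pred by measurable
  define J where "J = I - {i}"
  have I: "I = insert i J" and J: "finite J" "i \<notin> J"
    using \<open>i \<in> I\<close> \<open>finite I\<close> by (auto simp: J_def)
  have S: "S \<in> sets (Pi\<^sub>M (insert i J) M)" using meas by (simp flip: I)
  have "emeasure (Pi\<^sub>M I M) S = (\<integral>\<^sup>+ x. indicator S x \<partial>Pi\<^sub>M (insert i J) M)"
    using S by (simp add: I)
  also have "\<dots> = (\<integral>\<^sup>+ x. (\<integral>\<^sup>+ y. indicator S (x(i := y)) \<partial>M i) \<partial>Pi\<^sub>M J M)"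
    using S J by (subst product_nn_integral_insert) auto
  also have "\<dots> = 0"
  proof -
    have "(\<integral>\<^sup>+ y. indicator S (x(i := y)) \<partial>M i) = 0" for x
      using fibres[of x] by (subst nn_integral_cong_AE[where v = "\<lambda>_. 0"]) (auto simp: S_def)
    then show ?thesis by simp
  qed
  finally show ?thesis
    using meas by (subst AE_iff_measurable[OF _ S_def[symmetric]])
qed

lemma borel_measurable_cnj [measurable (raw)]:
  "f \<in> borel_measurable M \<Longrightarrow> (\<lambda>x. cnj (f x)) \<in> borel_measurable M"
  by (rule borel_measurable_continuous_on) (auto intro: continuous_intros)

lemma AE_lborel_not_in_negligible:
  fixes S :: "'a::euclidean_space set"
  assumes "negligible S"
  shows "AE x in lborel. x \<notin> S"
  using assms AE_not_in[of S lebesgue] by (simp add: negligible_iff_null_sets AE_completion_iff)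

lemma AE_lborel_norm_neq: "AE x in lborel. norm (x::'a::euclidean_space) \<noteq> r"
  using AE_lborel_not_in_negligible[OF negligible_sphere[of 0 r]] by (simp add: dist_norm)

lemma AE_lborel_inner_neq:
  fixes a :: "'a::euclidean_space"
  assumes "a \<noteq> 0"
  shows "AE x in lborel. a \<bullet> x \<noteq> r"
  using AE_lborel_not_in_negligible[OF negligible_hyperplane[of a r]] assms by simp

lemma AE_lborel_Re_mult_neq:
  fixes a :: complex
  assumes "a \<noteq> 0"
  shows "AE y in lborel. Re (a * y) \<noteq> r"
proof -
  have "Re (a * y) = cnj a \<bullet> y" for y by (simp add: inner_complex_def)
  then show ?thesis using AE_lborel_inner_neq[of "cnj a" r] assms by simp
qed

lemma AE_lborel_real_linear_neq:
  fixes a b g :: complex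
  assumes "a \<noteq> 0 \<or> b \<noteq> 0"
  shows "AE y in lborel. a * y + b * cnj y + g \<noteq> 0"
proof (cases "a + cnj b = 0")
  case False
  have zero: "Re ((a + cnj b) * y) = - Re g" if "a * y + b * cnj y + g = 0" for y
    using arg_cong[OF that, of Re] by (simp add: algebra_simps)
  from AE_lborel_Re_mult_neq[OF False] show ?thesis
    by (rule eventually_mono) (use zero in blast)
next
  case True
  then have "b = - cnj a" "a \<noteq> 0"
    using assms by (auto simp: add_eq_0_iff complex_cnj_cancel_iff dest: arg_cong[where f = cnj])
  then have zero: "Re (- \<i> * a * y) = - Im g / 2" if "a * y + b * cnj y + g = 0" for y
    using arg_cong[OF that, of Im] by (simp add: algebra_simps)
  have "- \<i> * a \<noteq> 0" using \<open>a \<noteq> 0\<close> by simp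
  from AE_lborel_Re_mult_neq[OF this] show ?thesis
    by (rule eventually_mono) (use zero in blast)
qed

lemma AE_lborel_sq_norm_neq: "AE y in lborel. y * cnj y + g \<noteq> (0::complex)"
proof -
  have "norm y = sqrt (- Re g)" if "y * cnj y + g = 0" for y
  proof -
    have "(norm y)\<^sup>2 = - Re g"
      unfolding cmod_power2 using arg_cong[OF that, of Re] by (simp add: power2_eq_square)
    then show ?thesis by (auto intro: real_sqrt_unique[symmetric])
  qed
  then show ?thesis by (auto intro: eventually_mono[OF AE_lborel_norm_neq[of "sqrt (- Re g)"]])
qed

section \<open>Roots of unity and residues modulo \<open>L\<close>\<close>

definition unity_root :: "nat \<Rightarrow> int \<Rightarrow> complex" where
  "unity_root L t = exp (2 * of_real pi * \<i> * of_int t / of_nat L)"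

definition zmod :: "nat \<Rightarrow> int \<Rightarrow> nat" where
  "zmod L m = nat (m mod int L)"

lemma unity_root_0 [simp]: "unity_root L 0 = 1"
  by (simp add: unity_root_def)

lemma unity_root_add: "unity_root L (a + b) = unity_root L a * unity_root L b"
  unfolding unity_root_def by (simp add: exp_add[symmetric] add_divide_distrib distrib_left distrib_right)

lemma cnj_unity_root: "cnj (unity_root L t) = unity_root L (- t)"
  unfolding unity_root_def by (simp add: exp_cnj)

text \<open>For \<open>L = 0\<close> the division by zero makes \<open>unity_root 0\<close> constantly \<open>1\<close>, so
  periodicity needs no hypothesis \<open>0 < L\<close>.\<close>

lemma unity_root_period: "unity_root L (int L * m) = 1"
proof (cases "L = 0")
  case False
  then have "unity_root L (int L * m) = exp ((2 * of_int m * pi) * \<i>)"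
    unfolding unity_root_def by (simp add: field_simps)
  also have "\<dots> = 1" by (rule exp_integer_2pi) simp
  finally show ?thesis .
qed (simp add: unity_root_def)

lemma unity_root_cong:
  assumes "int L dvd a - b"
  shows "unity_root L a = unity_root L b"
proof -
  obtain m where "a = b + int L * m"
    using assms by (metis dvdE diff_add_cancel add.commute)
  then show ?thesis by (simp add: unity_root_add unity_root_period)
qed

lemma unity_root_eq_1_imp_dvd:
  assumes "0 < L" "unity_root L t = 1"
  shows "int L dvd t"
proof -
  obtain n :: int where "2 * pi * t / L = 2 * n * pi"
    using assms(2) unfolding unity_root_def exp_eq_1 by auto
  then have "real_of_int t = real_of_int (n * int L)" using assms(1) by (simp add: field_simps)
  then have "t = n * int L" by (simp only: of_int_eq_iff)
  then show ?thesis by simp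
qed

lemma sum_unity_root:
  assumes "0 < L"
  shows "(\<Sum>d<L. unity_root L (t * int d)) = (if int L dvd t then of_nat L else 0)"
proof (cases "int L dvd t")
  case True
  then obtain m where "t = int L * m" by blast
  then have "unity_root L (t * int d) = 1" for d
    using unity_root_period[of L "m * int d"] by (simp add: mult.assoc)
  with True show ?thesis by simp
next
  case False
  have pow: "unity_root L (t * int d) = unity_root L t ^ d" for d
    by (induction d) (simp_all add: distrib_left unity_root_add)
  have "unity_root L t \<noteq> 1" using False unity_root_eq_1_imp_dvd[OF assms] by blast
  then have "(\<Sum>d<L. unity_root L t ^ d) = (unity_root L t ^ L - 1) / (unity_root L t - 1)"
    by (rule geometric_sum)
  moreover have "unity_root L t ^ L = 1"
    using pow[of L] unity_root_period[of L t] by (simp add: mult.commute)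
  ultimately show ?thesis using False by (simp add: pow)
qed

lemma dvd_diff_nat_less_iff:
  assumes "a < L" "b < L"
  shows "int L dvd (int a - int b) \<longleftrightarrow> a = b"
  using assms by (simp flip: mod_eq_dvd_iff add: of_nat_mod[symmetric])

lemma zmod_less: "0 < L \<Longrightarrow> zmod L m < L"
  unfolding zmod_def by (simp add: nat_less_iff)

lemma of_nat_zmod: "0 < L \<Longrightarrow> int (zmod L m) = m mod int L"
  unfolding zmod_def by simp

lemma zmod_of_nat: "m < L \<Longrightarrow> zmod L (int m) = m"
  unfolding zmod_def by simp

lemma zmod_eq_iff: "0 < L \<Longrightarrow> zmod L a = zmod L b \<longleftrightarrow> a mod int L = b mod int L"
  unfolding zmod_def by (simp add: nat_eq_iff)

lemma zmod_eq_0_iff: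
  assumes "0 < L"
  shows "zmod L m = 0 \<longleftrightarrow> int L dvd m"
proof -
  have "0 \<le> m mod int L" using assms by simp
  then show ?thesis unfolding zmod_def dvd_eq_mod_eq_0 by linarith
qed

lemma sum_zmod_shift:
  assumes "0 < L"
  shows "(\<Sum>p<L. h (zmod L (int p - k))) = (\<Sum>m<L. h m)"
proof (rule sum.reindex_bij_witness[where i = "\<lambda>m. zmod L (int m + k)" and j = "\<lambda>p. zmod L (int p - k)"])
  fix p assume "p \<in> {..<L}"
  then show "zmod L (int (zmod L (int p - k)) + k) = p"
    using assms by (simp add: of_nat_zmod zmod_def mod_simps)
next
  fix m assume "m \<in> {..<L}"
  then show "zmod L (int (zmod L (int m + k)) - k) = m"
    using assms by (simp add: of_nat_zmod zmod_def mod_simps)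
qed (simp_all add: zmod_less assms)

lemma dft_eq_0_imp_eq_0:
  assumes "0 < L"
    and dft: "\<And>j. j < L \<Longrightarrow> (\<Sum>k<L. b k * unity_root L (- (int j * int k))) = 0"
    and "k0 < L"
  shows "b k0 = 0"
proof -
  have "0 = (\<Sum>j<L. unity_root L (int j * int k0) * (\<Sum>k<L. b k * unity_root L (- (int j * int k))))"
    using dft by simp
  also have "\<dots> = (\<Sum>j<L. \<Sum>k<L. b k * unity_root L ((int k0 - int k) * int j))"
    by (simp add: sum_distrib_left algebra_simps flip: unity_root_add)
  also have "\<dots> = (\<Sum>k<L. b k * (\<Sum>j<L. unity_root L ((int k0 - int k) * int j)))"
    by (subst sum.swap) (simp add: sum_distrib_left)
  also have "\<dots> = (\<Sum>k<L. if k = k0 then b k * of_nat L else 0)"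
    using \<open>k0 < L\<close> by (intro sum.cong) (auto simp: sum_unity_root[OF assms(1)] dvd_diff_nat_less_iff)
  also have "\<dots> = b k0 * of_nat L"
    using \<open>k0 < L\<close> by simp
  finally show ?thesis using assms(1) by simp
qed

lemma dft2_eq_0_imp_eq_0:
  assumes "0 < L"
    and dft2: "\<And>j d. j < L \<Longrightarrow> d < L \<Longrightarrow>
      (\<Sum>k<L. \<Sum>n<L. b k n * unity_root L (int n * int d - int j * int k)) = 0"
    and "k < L" "n < L"
  shows "b k n = 0"
proof -
  have partial: "(\<Sum>n<L. b k n * unity_root L (int n * int d)) = 0" if "k < L" "d < L" for k d
  proof (rule dft_eq_0_imp_eq_0[OF \<open>0 < L\<close> _ \<open>k < L\<close>])
    fix j assume "j < L"
    with dft2 \<open>d < L\<close> show "(\<Sum>k<L. (\<Sum>n<L. b k n * unity_root L (int n * int d)) * unity_root L (- (int j * int k))) = 0"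
      by (simp add: sum_distrib_right mult.assoc flip: unity_root_add)
  qed
  have "cnj (b k n) = 0"
  proof (rule dft_eq_0_imp_eq_0[OF \<open>0 < L\<close> _ \<open>n < L\<close>])
    fix d assume "d < L"
    have "(\<Sum>n<L. cnj (b k n) * unity_root L (- (int d * int n))) = cnj (\<Sum>n<L. b k n * unity_root L (int n * int d))"
      by (simp add: cnj_unity_root mult.commute)
    then show "(\<Sum>n<L. cnj (b k n) * unity_root L (- (int d * int n))) = 0"
      using partial[OF \<open>k < L\<close> \<open>d < L\<close>] by simp
  qed
  then show ?thesis by simp
qed

section \<open>The ambiguity function\<close>

lemma tfshift_eq: "tfshift L (k, n) c p = unity_root L (int n * int p) * c (zmod L (int p - int k))"
  unfolding tfshift_def modul_def transl_def unity_root_def zmod_def by (simp add: mult.assoc)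

definition ambiguity :: "nat \<Rightarrow> (nat \<Rightarrow> complex) \<Rightarrow> nat \<Rightarrow> nat \<Rightarrow> complex" where
  "ambiguity L c j d = (\<Sum>m<L. unity_root L (- (int j * int m)) * c m * cnj (c (zmod L (int m - int d))))"

lemma ambiguity_tfshift:
  assumes "0 < L"
  shows "ambiguity L (tfshift L (k, n) c) j d = unity_root L (int n * int d - int j * int k) * ambiguity L c j d"
proof -
  define h where "h m = unity_root L (- (int j * int m)) * c m * cnj (c (zmod L (int m - int d)))" for m
  have summand: "unity_root L (- (int j * int p)) * tfshift L (k, n) c p * cnj (tfshift L (k, n) c (zmod L (int p - int d)))
      = unity_root L (int n * int d - int j * int k) * h (zmod L (int p - int k))" for p
  proof -
    let ?q = "zmod L (int p - int d)" and ?m = "zmod L (int p - int k)"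
    have phase: "unity_root L (- (int j * int p)) * unity_root L (int n * int p) * unity_root L (- (int n * int ?q))
        = unity_root L (int n * int d - int j * int k) * unity_root L (- (int j * int ?m))"
      unfolding unity_root_add[symmetric]
      by (rule unity_root_cong, rule dvdI[where k = "int n * ((int p - int d) div int L) - int j * ((int p - int k) div int L)"])
        (simp add: of_nat_zmod[OF assms] algebra_simps flip: minus_mult_div_eq_mod)
    have index: "zmod L (int ?q - int k) = zmod L (int ?m - int d)"
      using assms by (simp add: zmod_eq_iff of_nat_zmod mod_simps algebra_simps)
    have "unity_root L (- (int j * int p)) * tfshift L (k, n) c p * cnj (tfshift L (k, n) c ?q)
        = unity_root L (- (int j * int p)) * unity_root L (int n * int p) * unity_root L (- (int n * int ?q))
          * (c ?m * cnj (c (zmod L (int ?q - int k))))"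
      by (simp add: tfshift_eq cnj_unity_root mult_ac)
    also have "\<dots> = unity_root L (int n * int d - int j * int k) * h ?m"
      unfolding phase index h_def by (simp add: mult_ac)
    finally show ?thesis .
  qed
  have "ambiguity L (tfshift L (k, n) c) j d = (\<Sum>p<L. unity_root L (int n * int d - int j * int k) * h (zmod L (int p - int k)))"
    unfolding ambiguity_def summand ..
  also have "\<dots> = unity_root L (int n * int d - int j * int k) * ambiguity L c j d"
    unfolding sum_distrib_left[symmetric] sum_zmod_shift[OF assms] by (simp add: ambiguity_def h_def)
  finally show ?thesis .
qed

lemma sum_diag_pattern:
  "(\<Sum>ll\<in>diag_pattern L. F ll) = (\<Sum>k<L. \<Sum>n<L. F ((k, n), (k, n)))"
proof -
  have "diag_pattern L = (\<lambda>kn. (kn, kn)) ` ({..<L} \<times> {..<L})"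
    unfolding diag_pattern_def by auto
  moreover have "inj_on (\<lambda>kn. (kn, kn)) ({..<L} \<times> {..<L})"
    by (auto simp: inj_on_def)
  ultimately show ?thesis
    by (simp add: sum.reindex sum.cartesian_product)
qed

lemma permissible_diag_pattern_if_ambiguity_nonzero:
  assumes "0 < L" and nonzero: "\<And>j d. j < L \<Longrightarrow> d < L \<Longrightarrow> ambiguity L c j d \<noteq> 0"
  shows "permissible L (diag_pattern L) c"
  unfolding permissible_def
proof (intro allI impI ballI)
  fix a :: "(nat \<times> nat) \<times> (nat \<times> nat) \<Rightarrow> complex" and ll
  assume H: "\<forall>p<L. \<forall>q<L. (\<Sum>ll\<in>diag_pattern L. a ll * tfshift L (fst ll) c p * cnj (tfshift L (snd ll) c q)) = 0"
    and "ll \<in> diag_pattern L"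
  define b where "b k n = a ((k, n), (k, n))" for k n
  have G: "(\<Sum>k<L. \<Sum>n<L. b k n * tfshift L (k, n) c p * cnj (tfshift L (k, n) c q)) = 0"
    if "p < L" "q < L" for p q
    using H that by (simp add: sum_diag_pattern b_def)
  have "(\<Sum>k<L. \<Sum>n<L. b k n * unity_root L (int n * int d - int j * int k)) = 0"
    if "j < L" "d < L" for j d
  proof -
    have "ambiguity L c j d * (\<Sum>k<L. \<Sum>n<L. b k n * unity_root L (int n * int d - int j * int k))
        = (\<Sum>k<L. \<Sum>n<L. b k n * ambiguity L (tfshift L (k, n) c) j d)"
      by (simp add: ambiguity_tfshift[OF \<open>0 < L\<close>] sum_distrib_left mult_ac)
    also have "\<dots> = (\<Sum>p<L. unity_root L (- (int j * int p)) *
        (\<Sum>k<L. \<Sum>n<L. b k n * tfshift L (k, n) c p * cnj (tfshift L (k, n) c (zmod L (int p - int d)))))"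
      unfolding ambiguity_def sum_distrib_left
      by (subst sum.swap, subst (2) sum.swap) (simp add: mult_ac)
    also have "\<dots> = 0"
      using G zmod_less[OF \<open>0 < L\<close>] by simp
    finally show ?thesis using nonzero that by simp
  qed
  with \<open>0 < L\<close> \<open>ll \<in> diag_pattern L\<close> show "a ll = 0"
    unfolding diag_pattern_def b_def by (auto intro: dft2_eq_0_imp_eq_0)
qed

section \<open>Genericity\<close>

lemma borel_measurable_lebesgue_CL_component:
  "i < L \<Longrightarrow> (\<lambda>c. c i) \<in> borel_measurable (lebesgue_CL L)"
  using measurable_component_singleton[of i "{..<L}" "\<lambda>_. lborel"] unfolding lebesgue_CL_def by simp

lemma borel_measurable_ambiguity [measurable]:
  "(\<lambda>c. ambiguity L c j d) \<in> borel_measurable (lebesgue_CL L)"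
  unfolding ambiguity_def
proof (intro borel_measurable_sum)
  note borel_measurable_lebesgue_CL_component [measurable]
  fix m assume "m \<in> {..<L}"
  with zmod_less have "m < L" "zmod L (int m - int d) < L" by auto
  then show "(\<lambda>c. unity_root L (- (int j * int m)) * c m * cnj (c (zmod L (int m - int d))))
      \<in> borel_measurable (lebesgue_CL L)"
    by measurable
qed

lemma AE_lebesgue_CL_if_AE_fibres:
  assumes "i < L" "Measurable.pred (lebesgue_CL L) P" "\<And>x. AE y in lborel. P (x(i := y))"
  shows "AE c in lebesgue_CL L. P c"
proof -
  have "product_sigma_finite (\<lambda>_. lborel :: complex measure)" by standard
  with assms show ?thesis
    unfolding lebesgue_CL_def by (intro AE_PiM_if_AE_fibres) auto
qed

lemma ambiguity_upd_zero_lag: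
  assumes "0 < L"
  shows "\<exists>g. \<forall>y. ambiguity L (x(0 := y)) j 0 = y * cnj y + g"
proof -
  let ?f = "\<lambda>c m. unity_root L (- (int j * int m)) * c m * cnj (c (zmod L (int m - int 0)))"
  have "ambiguity L (x(0 := y)) j 0 = y * cnj y + (\<Sum>m\<in>{..<L} - {0}. ?f x m)" for y
  proof -
    have "ambiguity L (x(0 := y)) j 0 = ?f (x(0 := y)) 0 + (\<Sum>m\<in>{..<L} - {0}. ?f (x(0 := y)) m)"
      unfolding ambiguity_def using assms by (intro sum.remove) auto
    also have "(\<Sum>m\<in>{..<L} - {0}. ?f (x(0 := y)) m) = (\<Sum>m\<in>{..<L} - {0}. ?f x m)"
      by (intro sum.cong) (auto simp: zmod_of_nat)
    also have "?f (x(0 := y)) 0 = y * cnj y"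
      by (simp add: zmod_def)
    finally show ?thesis .
  qed
  then show ?thesis by blast
qed

lemma ambiguity_upd_nonzero_lag:
  assumes "0 < d" "d < L"
  shows "\<exists>a g. \<forall>y. ambiguity L (x(0 := y)) j d = a * y + unity_root L (- (int j * int d)) * x d * cnj y + g"
proof -
  let ?f = "\<lambda>c m. unity_root L (- (int j * int m)) * c m * cnj (c (zmod L (int m - int d)))"
  have lag: "zmod L (int m - int d) = 0 \<longleftrightarrow> m = d" if "m < L" for m
    using dvd_diff_nat_less_iff[OF that \<open>d < L\<close>] assms by (simp add: zmod_eq_0_iff)
  have "ambiguity L (x(0 := y)) j d = cnj (x (zmod L (- int d))) * y
      + unity_root L (- (int j * int d)) * x d * cnj y + (\<Sum>m\<in>{..<L} - {0} - {d}. ?f x m)" for y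
  proof -
    have "ambiguity L (x(0 := y)) j d = ?f (x(0 := y)) 0 + (\<Sum>m\<in>{..<L} - {0}. ?f (x(0 := y)) m)"
      unfolding ambiguity_def using assms by (intro sum.remove) auto
    also have "(\<Sum>m\<in>{..<L} - {0}. ?f (x(0 := y)) m)
        = ?f (x(0 := y)) d + (\<Sum>m\<in>{..<L} - {0} - {d}. ?f (x(0 := y)) m)"
      using assms by (intro sum.remove) auto
    also have "(\<Sum>m\<in>{..<L} - {0} - {d}. ?f (x(0 := y)) m) = (\<Sum>m\<in>{..<L} - {0} - {d}. ?f x m)"
      by (intro sum.cong) (auto simp: lag)
    also have "?f (x(0 := y)) 0 = cnj (x (zmod L (- int d))) * y"
      using lag[of 0] assms by simp
    also have "?f (x(0 := y)) d = unity_root L (- (int j * int d)) * x d * cnj y"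
      using lag[of d] assms by simp
    finally show ?thesis by (simp add: add.assoc fun_upd_def)
  qed
  then show ?thesis by blast
qed

lemma AE_ambiguity_nonzero:
  assumes "0 < L" "d < L"
  shows "AE c in lebesgue_CL L. ambiguity L c j d \<noteq> 0"
proof (cases "d = 0")
  case True
  show ?thesis
  proof (rule AE_lebesgue_CL_if_AE_fibres[where i = 0])
    fix x
    obtain g where "\<forall>y. ambiguity L (x(0 := y)) j 0 = y * cnj y + g"
      using ambiguity_upd_zero_lag[OF \<open>0 < L\<close>] by blast
    with True AE_lborel_sq_norm_neq[of g] show "AE y in lborel. ambiguity L (x(0 := y)) j d \<noteq> 0"
      by simp
  qed (use \<open>0 < L\<close> in auto)
next
  case False
  note borel_measurable_lebesgue_CL_component [measurable]
  have "AE c in lebesgue_CL L. c d \<noteq> 0"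
    by (rule AE_lebesgue_CL_if_AE_fibres[where i = d]) (use \<open>d < L\<close> AE_lborel_singleton in auto)
  moreover have "AE c in lebesgue_CL L. c d \<noteq> 0 \<longrightarrow> ambiguity L c j d \<noteq> 0"
  proof (rule AE_lebesgue_CL_if_AE_fibres[where i = 0])
    fix x
    obtain a g where upd: "\<forall>y. ambiguity L (x(0 := y)) j d = a * y + unity_root L (- (int j * int d)) * x d * cnj y + g"
      using ambiguity_upd_nonzero_lag[of d L x j] False \<open>d < L\<close> by auto
    show "AE y in lborel. (x(0 := y)) d \<noteq> 0 \<longrightarrow> ambiguity L (x(0 := y)) j d \<noteq> 0"
    proof (cases "x d = 0")
      case False
      then have "unity_root L (- (int j * int d)) * x d \<noteq> 0"
        by (simp add: unity_root_def)
      then have "AE y in lborel. a * y + unity_root L (- (int j * int d)) * x d * cnj y + g \<noteq> 0"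
        by (intro AE_lborel_real_linear_neq) simp
      then show ?thesis
        by (rule eventually_mono) (simp add: upd)
    qed (use \<open>d \<noteq> 0\<close> in simp)
  qed (use \<open>0 < L\<close> \<open>d < L\<close> in auto)
  ultimately show ?thesis
    by eventually_elim blast
qed

theorem mainTheorem8:
  fixes L :: nat
  assumes "L \<ge> 1"
  shows "AE c in lebesgue_CL L. permissible L (diag_pattern L) c"
proof -
  have "0 < L" using assms by simp
  then have "AE c in lebesgue_CL L. \<forall>j\<in>{..<L}. \<forall>d\<in>{..<L}. ambiguity L c j d \<noteq> 0"
    by (simp add: AE_finite_all AE_ambiguity_nonzero)
  then show ?thesis
    by (rule eventually_mono) (simp add: permissible_diag_pattern_if_ambiguity_nonzero[OF \<open>0 < L\<close>])
qed

end
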